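(* Let $(P_t)_{t\ge0}$ be a measurable Markovian transition function on a Polish space $E$ with Borel $\sigma$-algebra $\mathcal{B}$, and let $m$ be a nonzero finite positive measure on $(E,\mathcal{B})$. Suppose there exists a sequence $t_n\nearrow\infty$ with $c((P_t)_t,m,(t_n)_n)<m(E)$. Then there exists a compact set $K\subset E$ such that $$\limsup_{t\to\infty}\frac1t\int_0^t m(P_s1_K)\,ds>0.$$
   Context: $c((P_t)_t,m,(t_n)_n):=\lim_{\varepsilon\searrow0}\sup_{A\in\mathcal{B},\,m(A)\le\varepsilon}\sup_n\frac1{t_n}\int_0^{t_n}m(P_s1_A)\,ds$. A measurable Markovian transition function is a family of Markovian kernels with $P_tP_s=P_{t+s}$ and $(t,x)\mapsto P_tf(x)$ jointly measurable. *)

theory Defs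
  imports "HOL-Probability.Probability"
begin

definition markov_transition_function :: "(real \<Rightarrow> 'a::topological_space \<Rightarrow> 'a measure) \<Rightarrow> bool" where
  "markov_transition_function P \<longleftrightarrow>
     (\<forall>t\<ge>0. \<forall>x. prob_space (P t x) \<and> sets (P t x) = sets borel) \<and>
     (\<forall>t\<ge>0. \<forall>A\<in>sets borel. (\<lambda>x. measure (P t x) A) \<in> borel_measurable borel) \<and>
     (\<forall>s\<ge>0. \<forall>t\<ge>0. \<forall>x. \<forall>A\<in>sets borel.
        measure (P (t + s) x) A = (\<integral>y. measure (P s y) A \<partial>(P t x))) \<and>
     (\<forall>A\<in>sets borel. (\<lambda>(t, x). measure (P t x) A)
        \<in> borel_measurable (restrict_space borel {0..} \<Otimes>\<^sub>M borel))"

definition mP :: "(real \<Rightarrow> 'a::topological_space \<Rightarrow> 'a measure) \<Rightarrow> 'a measure \<Rightarrow> real \<Rightarrow> 'a set \<Rightarrow> real" where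
  "mP P m s A = (\<integral>x. measure (P s x) A \<partial>m)"

definition time_avg :: "(real \<Rightarrow> 'a::topological_space \<Rightarrow> 'a measure) \<Rightarrow> 'a measure \<Rightarrow> real \<Rightarrow> 'a set \<Rightarrow> real" where
  "time_avg P m t A = (1 / t) * (LINT s:{0..t}|lborel. mP P m s A)"

definition c_const :: "(real \<Rightarrow> 'a::topological_space \<Rightarrow> 'a measure) \<Rightarrow> 'a measure \<Rightarrow> (nat \<Rightarrow> real) \<Rightarrow> real" where
  "c_const P m tn = Lim (at_right 0)
     (\<lambda>\<epsilon>. SUP A\<in>{A\<in>sets borel. measure m A \<le> \<epsilon>}. SUP n. time_avg P m (tn n) A)"

end

theory Submission
  imports Defs
begin

text \<open>The time averages of a Borel set and of its complement add up to m(E). If c < m(E),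
then for some \<open>\<epsilon> > 0\<close> every set of m-measure at most \<open>\<epsilon>\<close> has time averages along \<open>(t\<^sub>n)\<close>
bounded by some \<open>F < m(E)\<close>. By inner regularity of m on the Polish space E there is a
compact K whose complement has measure at most \<open>\<epsilon>\<close>; then the time averages of K along
\<open>(t\<^sub>n)\<close> are at least \<open>m(E) - F > 0\<close>, and since \<open>t\<^sub>n \<rightarrow> \<infinity>\<close> this bounds the limsup.\<close>

lemma exists_compact_measure_Compl_less:
  fixes m :: "'a::{second_countable_topology, complete_space} measure"
  assumes "finite_measure m" "sets m = sets borel" "\<epsilon> > 0"
  shows "\<exists>K. compact K \<and> measure m (- K) < \<epsilon>"
proof -
  interpret finite_measure m by fact
  have space: "space m = UNIV"
    using assms(2) sets_eq_imp_space_eq by fastforce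
  have "\<exists>K. compact K \<and> measure m UNIV - \<epsilon> < measure m K"
  proof (cases "measure m UNIV < \<epsilon>")
    case True
    then show ?thesis by (intro exI[of _ "{}"]) auto
  next
    case False
    have "emeasure m UNIV = (SUP K \<in> {K. K \<subseteq> UNIV \<and> compact K}. emeasure m K)"
      by (rule inner_regular) (use assms(2) space in auto)
    moreover have "ennreal (measure m UNIV - \<epsilon>) < emeasure m UNIV"
      using assms(3) False space by (simp add: emeasure_eq_measure ennreal_lessI)
    ultimately obtain K where "compact K" "ennreal (measure m UNIV - \<epsilon>) < emeasure m K"
      by (auto simp: less_SUP_iff)
    then show ?thesis
      using False by (intro exI[of _ K]) (auto simp: emeasure_eq_measure ennreal_less_iff)
  qed
  then obtain K where K: "compact K" "measure m UNIV - \<epsilon> < measure m K"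
    by blast
  have K_sets: "K \<in> sets m"
    using K(1) assms(2) by (simp add: compact_imp_closed)
  have "measure m (- K) = measure m UNIV - measure m K"
    using finite_measure_compl[OF K_sets] space by (simp add: Compl_eq_Diff_UNIV)
  then show ?thesis
    using K by auto
qed

lemma Limsup_at_top_ge_along:
  fixes f :: "real \<Rightarrow> ereal" and tn :: "nat \<Rightarrow> real"
  assumes "filterlim tn at_top sequentially" "\<And>n. c \<le> f (tn n)"
  shows "c \<le> Limsup at_top f"
proof (rule Limsup_greatest)
  fix Q :: "real \<Rightarrow> bool" assume "eventually Q at_top"
  then have "eventually (\<lambda>n. Q (tn n)) sequentially"
    using assms(1) by (simp add: filterlim_iff)
  then obtain n where "Q (tn n)"
    by (meson eventually_sequentially order_refl)
  then show "c \<le> (SUP t\<in>Collect Q. f t)"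
    using assms(2) by (intro SUP_upper2[of "tn n"]) auto
qed

lemma Lim_at_right_less_imp_less:
  fixes F :: "real \<Rightarrow> real"
  assumes "\<And>\<epsilon>. \<epsilon> > 0 \<Longrightarrow> F \<epsilon> \<le> M" "Lim (at_right 0) F < M"
  shows "\<exists>\<epsilon>>0. F \<epsilon> < M"
proof (rule ccontr)
  assume "\<not> (\<exists>\<epsilon>>0. F \<epsilon> < M)"
  then have "eventually (\<lambda>\<epsilon>. F \<epsilon> = M) (at_right 0)"
    using assms(1) by (intro eventually_mono[OF eventually_at_right_less[of 0]]) force
  then have "Lim (at_right 0) F = M"
    by (intro tendsto_Lim tendsto_eventually) auto
  then show False
    using assms(2) by simp
qed

context
  fixes P :: "real \<Rightarrow> 'a::topological_space \<Rightarrow> 'a measure" and m :: "'a measure"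
  assumes markov: "markov_transition_function P"
    and finite: "finite_measure m" and sets_m: "sets m = sets borel"
begin

interpretation finite_measure m by (fact finite)

lemma prob_space_kernel:
  assumes "s \<ge> 0"
  shows "prob_space (P s x)" "sets (P s x) = sets borel"
  using markov assms unfolding markov_transition_function_def by blast+

lemma kernel_borel_measurable:
  assumes "s \<ge> 0" "A \<in> sets borel"
  shows "(\<lambda>x. measure (P s x) A) \<in> borel_measurable m"
  using markov assms sets_m unfolding markov_transition_function_def
  by (metis measurable_cong_sets)

lemma kernel_integrable:
  assumes "s \<ge> 0" "A \<in> sets borel"
  shows "integrable m (\<lambda>x. measure (P s x) A)"
  using prob_space.prob_le_1[OF prob_space_kernel(1)[OF assms(1)]]
  by (intro integrable_const_bound[where B=1]) (auto intro: kernel_borel_measurable[OF assms])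

lemma mP_nonneg: "0 \<le> mP P m s A"
  unfolding mP_def by (simp add: integral_nonneg)

lemma mP_le_measure_space:
  assumes "s \<ge> 0" "A \<in> sets borel"
  shows "mP P m s A \<le> measure m (space m)"
proof -
  have "mP P m s A \<le> (\<integral>x. 1 \<partial>m)"
    unfolding mP_def using prob_space.prob_le_1[OF prob_space_kernel(1)[OF assms(1)]]
    by (intro integral_mono kernel_integrable[OF assms]) auto
  then show ?thesis by simp
qed

lemma mP_add_Compl:
  assumes "s \<ge> 0" "A \<in> sets borel"
  shows "mP P m s A + mP P m s (- A) = measure m (space m)"
proof -
  have kernel_add_Compl: "measure (P s x) A + measure (P s x) (- A) = 1" for x
  proof -
    interpret prob_space "P s x" by (rule prob_space_kernel(1)[OF assms(1)])
    have "space (P s x) = UNIV"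
      using prob_space_kernel(2)[OF assms(1)] sets_eq_imp_space_eq by fastforce
    then show ?thesis
      using prob_compl[of A] prob_space_kernel(2)[OF assms(1)] assms(2)
      by (simp add: Compl_eq_Diff_UNIV)
  qed
  have "mP P m s A + mP P m s (- A) = (\<integral>x. measure (P s x) A + measure (P s x) (- A) \<partial>m)"
    unfolding mP_def using assms
    by (intro Bochner_Integration.integral_add[symmetric] kernel_integrable) auto
  then show ?thesis
    by (simp add: kernel_add_Compl)
qed

lemma mP_borel_measurable:
  assumes "A \<in> sets borel"
  shows "(\<lambda>s. mP P m s A) \<in> borel_measurable (restrict_space borel {0..})"
proof -
  have "(\<lambda>(t, x). measure (P t x) A) \<in> borel_measurable (restrict_space borel {0..} \<Otimes>\<^sub>M borel)"
    using markov assms unfolding markov_transition_function_def by blast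
  moreover have "sets (restrict_space borel {0..} \<Otimes>\<^sub>M borel) = sets (restrict_space borel {0::real..} \<Otimes>\<^sub>M m)"
    using sets_m by (intro sets_pair_measure_cong) auto
  ultimately have "(\<lambda>(t, x). measure (P t x) A) \<in> borel_measurable (restrict_space borel {0..} \<Otimes>\<^sub>M m)"
    using measurable_cong_sets by blast
  then show ?thesis
    unfolding mP_def by (rule borel_measurable_lebesgue_integral)
qed

lemma mP_set_integrable:
  assumes "A \<in> sets borel"
  shows "set_integrable lborel {0..t} (\<lambda>s. mP P m s A)"
  unfolding set_integrable_def
proof (rule integrableI_bounded_set[where A="{0..t}" and B="measure m (space m)"])
  have "(\<lambda>s. indicator {0..} s *\<^sub>R mP P m s A) \<in> borel_measurable borel"
    using mP_borel_measurable[OF assms]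
      borel_measurable_restrict_space_iff[of "{0::real..}" borel "\<lambda>s. mP P m s A"]
    by simp
  then have "(\<lambda>s. indicator {0..t} s *\<^sub>R (indicator {0..} s *\<^sub>R mP P m s A)) \<in> borel_measurable borel"
    by measurable
  moreover have "(\<lambda>s. indicator {0..t} s *\<^sub>R (indicator {0..} s *\<^sub>R mP P m s A))
      = (\<lambda>s. indicator {0..t} s *\<^sub>R mP P m s A)"
    by (auto simp: indicator_def)
  ultimately show "(\<lambda>s. indicator {0..t} s *\<^sub>R mP P m s A) \<in> borel_measurable lborel"
    by simp
  show "AE s in lborel. s \<in> {0..t} \<longrightarrow> norm (indicator {0..t} s *\<^sub>R mP P m s A) \<le> measure m (space m)"
    using mP_nonneg mP_le_measure_space[OF _ assms] by (auto simp: indicator_def)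
qed (auto simp: indicator_def emeasure_lborel_Icc_eq)

lemma average_Icc_const:
  fixes t c :: real
  assumes "t > 0" "\<And>s. s \<in> {0..t} \<Longrightarrow> f s = c"
  shows "(1 / t) * (LINT s:{0..t}|lborel. f s) = c"
proof -
  have "(LINT s:{0..t}|lborel. f s) = (LINT s:{0..t}|lborel. c)"
    using assms(2) by (intro set_lebesgue_integral_cong) auto
  also have "\<dots> = t * c"
    using assms(1) by (subst set_integral_const) (auto simp: emeasure_lborel_Icc_eq)
  finally show ?thesis
    using assms(1) by simp
qed

lemma time_avg_le_measure_space:
  assumes "t > 0" "A \<in> sets borel"
  shows "time_avg P m t A \<le> measure m (space m)"
proof -
  have "(LINT s:{0..t}|lborel. mP P m s A) \<le> (LINT s:{0..t}|lborel. measure m (space m))"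
    using assms(1) mP_le_measure_space[OF _ assms(2)]
    by (intro set_integral_mono mP_set_integrable[OF assms(2)])
      (auto simp: set_integrable_def emeasure_lborel_Icc_eq)
  then have "time_avg P m t A \<le> (1 / t) * (LINT s:{0..t}|lborel. measure m (space m))"
    unfolding time_avg_def using assms(1) by (simp add: divide_right_mono)
  also have "\<dots> = measure m (space m)"
    using assms(1) by (rule average_Icc_const) simp
  finally show ?thesis .
qed

lemma time_avg_add_Compl:
  assumes "t > 0" "A \<in> sets borel"
  shows "time_avg P m t A + time_avg P m t (- A) = measure m (space m)"
proof -
  have "time_avg P m t A + time_avg P m t (- A)
      = (1 / t) * (LINT s:{0..t}|lborel. mP P m s A + mP P m s (- A))"
    unfolding time_avg_def using assms(2)
    by (simp add: set_integral_add(2) mP_set_integrable distrib_left)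
  also have "\<dots> = measure m (space m)"
    using assms by (intro average_Icc_const) (auto simp: mP_add_Compl)
  finally show ?thesis .
qed

lemma time_avg_le_SUP_small:
  assumes "\<forall>n. tn n > 0" "A \<in> sets borel" "measure m A \<le> \<epsilon>"
  shows "time_avg P m (tn n) A
    \<le> (SUP B\<in>{B\<in>sets borel. measure m B \<le> \<epsilon>}. SUP n. time_avg P m (tn n) B)"
proof -
  have bdd_n: "bdd_above (range (\<lambda>n. time_avg P m (tn n) B))" if "B \<in> sets borel" for B
    using assms(1) time_avg_le_measure_space that by (intro bdd_aboveI2) blast
  have bdd_B: "bdd_above ((\<lambda>B. SUP n. time_avg P m (tn n) B) ` {B\<in>sets borel. measure m B \<le> \<epsilon>})"
    using assms(1) time_avg_le_measure_space
    by (intro bdd_aboveI2[where M="measure m (space m)"]) (auto intro: cSUP_least)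
  have "time_avg P m (tn n) A \<le> (SUP n. time_avg P m (tn n) A)"
    by (rule cSUP_upper[OF _ bdd_n[OF assms(2)]]) simp
  also have "\<dots> \<le> (SUP B\<in>{B\<in>sets borel. measure m B \<le> \<epsilon>}. SUP n. time_avg P m (tn n) B)"
    by (rule cSUP_upper[OF _ bdd_B]) (use assms(2,3) in simp)
  finally show ?thesis .
qed

lemma SUP_small_time_avg_le_measure_space:
  assumes "\<forall>n. tn n > 0" "\<epsilon> \<ge> 0"
  shows "(SUP A\<in>{A\<in>sets borel. measure m A \<le> \<epsilon>}. SUP n. time_avg P m (tn n) A)
    \<le> measure m (space m)"
proof (rule cSUP_least)
  show "{A\<in>sets borel. measure m A \<le> \<epsilon>} \<noteq> {}"
    using assms(2) by (intro ex_in_conv[THEN iffD1] exI[of _ "{}"]) auto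
qed (use assms(1) time_avg_le_measure_space in \<open>auto intro: cSUP_least\<close>)

end

theorem proposition3p2:
  fixes P :: "real \<Rightarrow> 'a::polish_space \<Rightarrow> 'a measure"
    and m :: "'a measure"
    and tn :: "nat \<Rightarrow> real"
  assumes "markov_transition_function P"
    and "finite_measure m" and "sets m = sets borel" and "emeasure m (space m) \<noteq> 0"
    and "\<forall>n. tn n > 0" and "incseq tn" and "filterlim tn at_top sequentially"
    and "c_const P m tn < measure m (space m)"
  shows "\<exists>K. compact K \<and>
     Limsup at_top (\<lambda>t::real. ereal (time_avg P m t K)) > 0"
proof -
  define M where "M = measure m (space m)"
  define F where "F = (\<lambda>\<epsilon>. SUP A\<in>{A\<in>sets borel. measure m A \<le> \<epsilon>}. SUP n. time_avg P m (tn n) A)"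
  have "\<exists>\<epsilon>>0. F \<epsilon> < M"
    using SUP_small_time_avg_le_measure_space[OF assms(1-3,5)] assms(8)
    unfolding F_def M_def c_const_def by (intro Lim_at_right_less_imp_less) auto
  then obtain \<epsilon> where "\<epsilon> > 0" "F \<epsilon> < M"
    by blast
  obtain K where K: "compact K" "measure m (- K) < \<epsilon>"
    using exists_compact_measure_Compl_less[OF assms(2,3) \<open>\<epsilon> > 0\<close>] by blast
  have K_borel: "K \<in> sets borel"
    using K(1) by (simp add: compact_imp_closed)
  have "time_avg P m (tn n) (- K) \<le> F \<epsilon>" for n
    unfolding F_def using K(2) K_borel assms(5)
    by (intro time_avg_le_SUP_small[OF assms(1-3)]) auto
  then have "ereal (M - F \<epsilon>) \<le> ereal (time_avg P m (tn n) K)" for n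
    using time_avg_add_Compl[OF assms(1-3) _ K_borel, of "tn n"] assms(5) unfolding M_def
    by (smt (verit) ereal_less_eq(3))
  then have "ereal (M - F \<epsilon>) \<le> Limsup at_top (\<lambda>t. ereal (time_avg P m t K))"
    by (rule Limsup_at_top_ge_along[OF assms(7)])
  moreover have "0 < ereal (M - F \<epsilon>)"
    using \<open>F \<epsilon> < M\<close> by simp
  ultimately show ?thesis
    using K(1) order_less_le_trans by blast
qed

end
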